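(* Let $I$ be a countable set with $|I|\ge2$, let each $\mathfrak{M}_i=(S_i,\mathcal{L}_i)$, $i\in I$, be a Veblenian gamma space all of whose lines have at least $4$ points, let $\mathfrak{M}=\bigotimes_{i\in I}\mathfrak{M}_i$ with point set $S$, and let $\mathcal{H}$ be a hyperplane of $\mathfrak{M}$. For $X\subseteq S$ the following are equivalent: (i) $X$ is a strong subspace of $\mathfrak{M}\setminus\mathcal{H}$; (ii) $X=a[i/Y_i]\setminus\mathcal{H}$ for some $a\in S$, $i\in I$ and a strong subspace $Y_i$ of $\mathfrak{M}_i$; (iii) $X=a[i/X_i]$ for some $a\in S$, $i\in I$ and a strong subspace $X_i$ of $\mathfrak{M}_i\setminus\mathcal{H}^{[a]}_i$.
   Context: A partial linear space is a pair $(S,\mathcal{L})$ of points and lines such that every line has at least two points, every point lies on a line, two distinct lines share at most one point; points are collinear if on a common line. A subspace is a set such that any line meeting it in at least two points lies in it; it is strong if any two of its points are collinear. A hyperplane is a proper subspace meeting every line. A gamma space is one in which the set of points collinear with any given point is a subspace. It is Veblenian if for any two distinct lines $L_1,L_2$ through a point $p$ and any two distinct lines $K_1,K_2$ not through $p$ such that each $K_j$ meets both $L_1,L_2$, the lines $K_1,K_2$ meet. Segre product: points $S=\prod_i S_i$; $a[i/x]$ is $a$ with $i$-th coordinate replaced by $x$, $a[i/A]=\{a[i/x]:x\in A\}$; lines $a[i/l]$, $l\in\mathcal{L}_i$. $\mathcal{H}^{[a]}_i=\{x\in S_i:a[i/x]\in\mathcal{H}\}$. For a subset $\mathcal{G}$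 of the points of a partial linear space $\mathfrak{N}$ which is a hyperplane or the whole point set, the complement $\mathfrak{N}\setminus\mathcal{G}$ has the points not in $\mathcal{G}$ and the lines $L\setminus\mathcal{G}$ for lines $L\not\subseteq\mathcal{G}$ (and parallelism: lines equivalent iff they meet $\mathcal{G}$ in the same point); subspaces and strong subspaces of a complement are taken with respect to these points and lines. *)

theory Defs
  imports "HOL-Library.FuncSet" "HOL-Library.Countable_Set"
begin

definition partial_linear_space :: "'p set \<Rightarrow> 'p set set \<Rightarrow> bool" where
  "partial_linear_space S L \<longleftrightarrow>
     (\<forall>l\<in>L. l \<subseteq> S \<and> (\<exists>x y. x \<in> l \<and> y \<in> l \<and> x \<noteq> y)) \<and>
     (\<forall>p\<in>S. \<exists>l\<in>L. p \<in> l) \<and>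
     (\<forall>l1\<in>L. \<forall>l2\<in>L. l1 \<noteq> l2 \<longrightarrow> (\<forall>x y. x \<in> l1 \<inter> l2 \<and> y \<in> l1 \<inter> l2 \<longrightarrow> x = y))"

definition collinear :: "'p set set \<Rightarrow> 'p \<Rightarrow> 'p \<Rightarrow> bool" where
  "collinear L p q \<longleftrightarrow> (\<exists>l\<in>L. p \<in> l \<and> q \<in> l)"

definition subspace :: "'p set \<Rightarrow> 'p set set \<Rightarrow> 'p set \<Rightarrow> bool" where
  "subspace S L X \<longleftrightarrow> X \<subseteq> S \<and>
     (\<forall>l\<in>L. (\<exists>x y. x \<in> l \<inter> X \<and> y \<in> l \<inter> X \<and> x \<noteq> y) \<longrightarrow> l \<subseteq> X)"

definition strong_subspace :: "'p set \<Rightarrow> 'p set set \<Rightarrow> 'p set \<Rightarrow> bool" where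
  "strong_subspace S L X \<longleftrightarrow> subspace S L X \<and> (\<forall>x\<in>X. \<forall>y\<in>X. collinear L x y)"

definition hyperplane :: "'p set \<Rightarrow> 'p set set \<Rightarrow> 'p set \<Rightarrow> bool" where
  "hyperplane S L H \<longleftrightarrow> subspace S L H \<and> H \<noteq> S \<and> (\<forall>l\<in>L. l \<inter> H \<noteq> {})"

definition gamma_space :: "'p set \<Rightarrow> 'p set set \<Rightarrow> bool" where
  "gamma_space S L \<longleftrightarrow> partial_linear_space S L \<and>
     (\<forall>p\<in>S. subspace S L {q. collinear L p q})"

definition veblenian :: "'p set \<Rightarrow> 'p set set \<Rightarrow> bool" where
  "veblenian S L \<longleftrightarrow>
     (\<forall>p L1 L2 K1 K2. L1 \<in> L \<and> L2 \<in> L \<and> K1 \<in> L \<and> K2 \<in> L \<and>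
        L1 \<noteq> L2 \<and> p \<in> L1 \<and> p \<in> L2 \<and>
        K1 \<noteq> K2 \<and> p \<notin> K1 \<and> p \<notin> K2 \<and>
        K1 \<inter> L1 \<noteq> {} \<and> K1 \<inter> L2 \<noteq> {} \<and> K2 \<inter> L1 \<noteq> {} \<and> K2 \<inter> L2 \<noteq> {}
        \<longrightarrow> K1 \<inter> K2 \<noteq> {})"

definition compl_points :: "'p set \<Rightarrow> 'p set \<Rightarrow> 'p set" where
  "compl_points S G = S - G"

definition compl_lines :: "'p set set \<Rightarrow> 'p set \<Rightarrow> 'p set set" where
  "compl_lines L G = {l - G | l. l \<in> L \<and> \<not> l \<subseteq> G}"

definition subst_pt :: "('i \<Rightarrow> 'p) \<Rightarrow> 'i \<Rightarrow> 'p \<Rightarrow> ('i \<Rightarrow> 'p)" where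
  "subst_pt a i x = a(i := x)"

definition subst_set :: "('i \<Rightarrow> 'p) \<Rightarrow> 'i \<Rightarrow> 'p set \<Rightarrow> ('i \<Rightarrow> 'p) set" where
  "subst_set a i A = subst_pt a i ` A"

definition segre_points :: "'i set \<Rightarrow> ('i \<Rightarrow> 'p set) \<Rightarrow> ('i \<Rightarrow> 'p) set" where
  "segre_points I S = PiE I S"

definition segre_lines :: "'i set \<Rightarrow> ('i \<Rightarrow> 'p set) \<Rightarrow> ('i \<Rightarrow> 'p set set) \<Rightarrow> ('i \<Rightarrow> 'p) set set" where
  "segre_lines I S L = {subst_set a i l | a i l. a \<in> segre_points I S \<and> i \<in> I \<and> l \<in> L i}"

definition trace :: "('i \<Rightarrow> 'p set) \<Rightarrow> ('i \<Rightarrow> 'p) set \<Rightarrow> ('i \<Rightarrow> 'p) \<Rightarrow> 'i \<Rightarrow> 'p set" where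
  "trace S H a i = {x \<in> S i. subst_pt a i x \<in> H}"

end

theory Submission
  imports Defs
begin

text \<open>Points of a strong subspace of the complement \<open>M - H\<close> are pairwise collinear, and
  collinear points of a Segre product differ in a single coordinate, hence the subspace lies in one
  fibre \<open>a[i/S_i]\<close>. The map \<open>x \<mapsto> a[i/x]\<close> carries the lines of \<open>M_i - H^[a]_i\<close> onto the lines
  of \<open>M - H\<close> that meet this fibre twice, which gives (i) \<open>\<longleftrightarrow>\<close> (iii).
  For (ii), a strong subspace \<open>X\<close> of the complement of a subspace \<open>T\<close> of a Veblenian gamma
  space with lines of at least four points is completed by the points of \<open>T\<close> on lines joining
  two points of \<open>X\<close>. Veblen's axiom shows that a line through two points of the completion stays
  inside it, the gamma property makes any two of its points collinear, and removing \<open>T\<close> gives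
  back \<open>X\<close>.\<close>

section \<open>Strong subspaces and complements\<close>

lemma strong_subspaceI:
  assumes "X \<subseteq> P"
    and "\<And>l x y. l \<in> LL \<Longrightarrow> x \<in> l \<Longrightarrow> y \<in> l \<Longrightarrow> x \<in> X \<Longrightarrow> y \<in> X \<Longrightarrow> x \<noteq> y \<Longrightarrow> l \<subseteq> X"
    and "\<And>x y. x \<in> X \<Longrightarrow> y \<in> X \<Longrightarrow> \<exists>l\<in>LL. x \<in> l \<and> y \<in> l"
  shows "strong_subspace P LL X"
  unfolding strong_subspace_def subspace_def collinear_def
  using assms by (metis (no_types, lifting) IntE)

lemma strong_subspace_subset: "strong_subspace P LL X \<Longrightarrow> X \<subseteq> P"
  unfolding strong_subspace_def subspace_def by blast

lemma strong_subspace_line_subset: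
  "strong_subspace P LL X \<Longrightarrow> l \<in> LL \<Longrightarrow> x \<in> l \<Longrightarrow> y \<in> l \<Longrightarrow> x \<in> X \<Longrightarrow> y \<in> X \<Longrightarrow> x \<noteq> y
    \<Longrightarrow> l \<subseteq> X"
  unfolding strong_subspace_def subspace_def by auto

lemma strong_subspace_collinear:
  "strong_subspace P LL X \<Longrightarrow> x \<in> X \<Longrightarrow> y \<in> X \<Longrightarrow> \<exists>l\<in>LL. x \<in> l \<and> y \<in> l"
  unfolding strong_subspace_def collinear_def by auto

lemma compl_linesI: "l \<in> L \<Longrightarrow> x \<in> l \<Longrightarrow> x \<notin> G \<Longrightarrow> l - G \<in> compl_lines L G"
  unfolding compl_lines_def by blast

lemma compl_linesE:
  assumes "l' \<in> compl_lines L G"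
  obtains l where "l \<in> L" "\<not> l \<subseteq> G" "l' = l - G"
  using assms unfolding compl_lines_def by blast

lemma strong_subspace_compl:
  assumes Y: "strong_subspace S L Y"
  shows "strong_subspace (S - T) (compl_lines L T) (Y - T)"
proof (rule strong_subspaceI)
  show "Y - T \<subseteq> S - T" using strong_subspace_subset[OF Y] by blast
next
  fix l' x y assume l': "l' \<in> compl_lines L T" "x \<in> l'" "y \<in> l'" "x \<in> Y - T" "y \<in> Y - T" "x \<noteq> y"
  then obtain l where "l \<in> L" "l' = l - T" by (auto elim: compl_linesE)
  moreover have "x \<in> l" "y \<in> l" "x \<in> Y" "y \<in> Y" using l' \<open>l' = l - T\<close> by auto
  ultimately have "l \<subseteq> Y" using strong_subspace_line_subset[OF Y] \<open>x \<noteq> y\<close> by blast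
  then show "l' \<subseteq> Y - T" using \<open>l' = l - T\<close> by blast
next
  fix x y assume "x \<in> Y - T" "y \<in> Y - T"
  then obtain l where "l \<in> L" "x \<in> l" "y \<in> l" "x \<notin> T" "y \<notin> T"
    using strong_subspace_collinear[OF Y] by blast
  then have "l - T \<in> compl_lines L T" "x \<in> l - T" "y \<in> l - T"
    by (auto intro: compl_linesI)
  then show "\<exists>l'\<in>compl_lines L T. x \<in> l' \<and> y \<in> l'" by (intro bexI[of _ "l - T"]) simp_all
qed

lemma strong_subspace_image_iff:
  assumes "inj f"
    and points: "\<And>z. f z \<in> P \<longleftrightarrow> z \<in> Q"
    and lines_image: "\<And>m. m \<in> LQ \<Longrightarrow> f ` m \<in> LP"
    and lines_preimage:
      "\<And>l z1 z2. l \<in> LP \<Longrightarrow> f z1 \<in> l \<Longrightarrow> f z2 \<in> l \<Longrightarrow> z1 \<noteq> z2 \<Longrightarrow> \<exists>m\<in>LQ. l = f ` m"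
    and covered: "\<And>z. z \<in> Q \<Longrightarrow> \<exists>m\<in>LQ. z \<in> m"
  shows "strong_subspace P LP (f ` Z) \<longleftrightarrow> strong_subspace Q LQ Z"
proof
  assume fZ: "strong_subspace P LP (f ` Z)"
  show "strong_subspace Q LQ Z"
  proof (rule strong_subspaceI)
    show "Z \<subseteq> Q" using strong_subspace_subset[OF fZ] points by blast
  next
    fix m z1 z2 assume "m \<in> LQ" "z1 \<in> m" "z2 \<in> m" "z1 \<in> Z" "z2 \<in> Z" "z1 \<noteq> z2"
    then have "f ` m \<subseteq> f ` Z"
      using strong_subspace_line_subset[OF fZ lines_image] inj_eq[OF \<open>inj f\<close>] by blast
    then show "m \<subseteq> Z" using inj_image_subset_iff[OF \<open>inj f\<close>] by blast
  next
    fix z1 z2 assume z: "z1 \<in> Z" "z2 \<in> Z"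
    show "\<exists>m\<in>LQ. z1 \<in> m \<and> z2 \<in> m"
    proof (cases "z1 = z2")
      case True
      then show ?thesis using z covered strong_subspace_subset[OF fZ] points by blast
    next
      case False
      obtain l where "l \<in> LP" "f z1 \<in> l" "f z2 \<in> l"
        using strong_subspace_collinear[OF fZ] z by blast
      then obtain m where "m \<in> LQ" "l = f ` m" using lines_preimage False by blast
      then show ?thesis using \<open>f z1 \<in> l\<close> \<open>f z2 \<in> l\<close> inj_image_mem_iff[OF \<open>inj f\<close>] by blast
    qed
  qed
next
  assume Z: "strong_subspace Q LQ Z"
  show "strong_subspace P LP (f ` Z)"
  proof (rule strong_subspaceI)
    show "f ` Z \<subseteq> P" using strong_subspace_subset[OF Z] points by blast
  next
    fix l u v assume l: "l \<in> LP" "u \<in> l" "v \<in> l" "u \<in> f ` Z" "v \<in> f ` Z" "u \<noteq> v"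
    then obtain z1 z2 where z: "z1 \<in> Z" "z2 \<in> Z" "u = f z1" "v = f z2" "z1 \<noteq> z2" by blast
    then obtain m where m: "m \<in> LQ" "l = f ` m" using lines_preimage l(1-3) by blast
    then have "z1 \<in> m" "z2 \<in> m" using l(2,3) z(3,4) inj_image_mem_iff[OF \<open>inj f\<close>] by simp_all
    then have "m \<subseteq> Z" using strong_subspace_line_subset[OF Z m(1)] z(1,2,5) by simp
    then show "l \<subseteq> f ` Z" using m(2) by blast
  next
    fix u v assume "u \<in> f ` Z" "v \<in> f ` Z"
    then obtain z1 z2 where z: "z1 \<in> Z" "z2 \<in> Z" "u = f z1" "v = f z2" by blast
    then obtain m where "m \<in> LQ" "z1 \<in> m" "z2 \<in> m" using strong_subspace_collinear[OF Z] by blast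
    then show "\<exists>l\<in>LP. u \<in> l \<and> v \<in> l" using lines_image z(3,4) by (intro bexI[of _ "f ` m"]) simp_all
  qed
qed

section \<open>Completing a strong subspace of a complement\<close>

lemma exists_point_avoiding_three:
  assumes "infinite A \<or> 4 \<le> card A"
  obtains z where "z \<in> A" "z \<noteq> a" "z \<noteq> b" "z \<noteq> c"
proof -
  have "\<not> A \<subseteq> {a, b, c}"
  proof
    assume "A \<subseteq> {a, b, c}"
    then have "finite A" "card A \<le> card {a, b, c}" by (auto intro: finite_subset card_mono)
    moreover have "card {a, b, c} \<le> 3" by (simp add: card_insert_le_m1)
    ultimately show False using assms by linarith
  qed
  then show thesis using that by blast
qed

locale thick_veblenian_gamma_space =
  fixes S :: "'p set" and L :: "'p set set"
  assumes gamma: "gamma_space S L"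
    and veblen: "veblenian S L"
    and thick: "\<And>l. l \<in> L \<Longrightarrow> infinite l \<or> 4 \<le> card l"
begin

lemma line_eqI:
  assumes "l1 \<in> L" "l2 \<in> L" "x \<in> l1" "y \<in> l1" "x \<in> l2" "y \<in> l2" "x \<noteq> y"
  shows "l1 = l2"
proof (rule ccontr)
  assume "l1 \<noteq> l2"
  moreover have "\<forall>l1\<in>L. \<forall>l2\<in>L. l1 \<noteq> l2 \<longrightarrow> (\<forall>x y. x \<in> l1 \<inter> l2 \<and> y \<in> l1 \<inter> l2 \<longrightarrow> x = y)"
    using gamma unfolding gamma_space_def partial_linear_space_def by blast
  ultimately show False using assms by blast
qed

lemma collinear_line_closed:
  assumes "p \<in> S" "m \<in> L" "x \<in> m" "y \<in> m" "x \<noteq> y" "collinear L p x" "collinear L p y"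
    and "z \<in> m"
  shows "collinear L p z"
proof -
  have "subspace S L {q. collinear L p q}" using gamma \<open>p \<in> S\<close> unfolding gamma_space_def by blast
  then have "\<forall>l\<in>L. (\<exists>x y. x \<in> l \<inter> {q. collinear L p q} \<and> y \<in> l \<inter> {q. collinear L p q} \<and> x \<noteq> y)
      \<longrightarrow> l \<subseteq> {q. collinear L p q}"
    unfolding subspace_def by blast
  moreover have "\<exists>x y. x \<in> m \<inter> {q. collinear L p q} \<and> y \<in> m \<inter> {q. collinear L p q} \<and> x \<noteq> y"
    using assms(3-7) by blast
  ultimately show ?thesis using \<open>m \<in> L\<close> \<open>z \<in> m\<close> by blast
qed

lemma veblen_meet:
  assumes "L1 \<in> L" "L2 \<in> L" "K1 \<in> L" "K2 \<in> L" "L1 \<noteq> L2" "p \<in> L1" "p \<in> L2"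
    and "K1 \<noteq> K2" "p \<notin> K1" "p \<notin> K2"
    and "a1 \<in> K1 \<inter> L1" "b1 \<in> K1 \<inter> L2" "a2 \<in> K2 \<inter> L1" "b2 \<in> K2 \<inter> L2"
  obtains w where "w \<in> K1" "w \<in> K2"
proof -
  have "K1 \<inter> L1 \<noteq> {}" "K1 \<inter> L2 \<noteq> {}" "K2 \<inter> L1 \<noteq> {}" "K2 \<inter> L2 \<noteq> {}"
    using assms(11-14) by blast+
  then have "K1 \<inter> K2 \<noteq> {}"
    using veblen assms(1-10) unfolding veblenian_def by blast
  then show thesis using that by blast
qed

end

locale strong_subspace_of_complement = thick_veblenian_gamma_space +
  fixes T :: "'p set" and X :: "'p set"
  assumes T_subspace: "subspace S L T"
    and X_strong: "strong_subspace (S - T) (compl_lines L T) X"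
begin

lemma T_subset: "T \<subseteq> S"
  using T_subspace unfolding subspace_def by blast

lemma T_line_subset:
  assumes "l \<in> L" "x \<in> l" "y \<in> l" "x \<in> T" "y \<in> T" "x \<noteq> y"
  shows "l \<subseteq> T"
proof -
  have "\<forall>l\<in>L. (\<exists>x y. x \<in> l \<inter> T \<and> y \<in> l \<inter> T \<and> x \<noteq> y) \<longrightarrow> l \<subseteq> T"
    using T_subspace unfolding subspace_def by blast
  moreover have "\<exists>x y. x \<in> l \<inter> T \<and> y \<in> l \<inter> T \<and> x \<noteq> y" using assms(2-6) by blast
  ultimately show ?thesis using \<open>l \<in> L\<close> by blast
qed

lemma line_meets_T_once:
  assumes "l \<in> L" "p \<in> l" "q \<in> l" "p \<in> T" "q \<in> T" "z \<in> l" "z \<notin> T"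
  shows "p = q"
  using T_line_subset[of l p q] assms by blast

lemma X_subset: "X \<subseteq> S - T"
  using strong_subspace_subset[OF X_strong] .

lemma X_disjoint_T: "x \<in> X \<Longrightarrow> x \<notin> T"
  using X_subset by blast

lemma X_points: "x \<in> X \<Longrightarrow> x \<in> S"
  using X_subset by blast

lemma X_line_closed:
  assumes "m \<in> L" "x \<in> m" "y \<in> m" "x \<in> X" "y \<in> X" "x \<noteq> y" "z \<in> m" "z \<notin> T"
  shows "z \<in> X"
proof -
  have "x \<notin> T" using X_disjoint_T \<open>x \<in> X\<close> .
  then have "m - T \<in> compl_lines L T" using assms(1,2) by (rule compl_linesI[rotated 2])
  moreover have "x \<in> m - T" "y \<in> m - T" using assms(2-5) X_subset by blast+
  ultimately have "m - T \<subseteq> X" using strong_subspace_line_subset[OF X_strong] assms(4-6) by blast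
  then show ?thesis using assms(7,8) by blast
qed

lemma X_collinear:
  assumes "x \<in> X" "y \<in> X"
  obtains l where "l \<in> L" "x \<in> l" "y \<in> l"
proof -
  obtain l' where "l' \<in> compl_lines L T" "x \<in> l'" "y \<in> l'"
    using strong_subspace_collinear[OF X_strong assms] by blast
  then show thesis using that by (auto elim: compl_linesE)
qed

definition points_at_infinity :: "'p set" where
  "points_at_infinity =
    {p \<in> T. \<exists>l\<in>L. \<exists>y1\<in>X. \<exists>y2\<in>X. y1 \<noteq> y2 \<and> p \<in> l \<and> y1 \<in> l \<and> y2 \<in> l}"

lemma points_at_infinityE:
  assumes "p \<in> points_at_infinity"
  obtains l y1 y2 where "l \<in> L" "p \<in> l" "y1 \<in> X" "y2 \<in> X" "y1 \<noteq> y2" "y1 \<in> l" "y2 \<in> l" "p \<in> T"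
  using assms unfolding points_at_infinity_def by blast

lemma collinear_X_point_at_infinity:
  assumes "x \<in> X" "p \<in> points_at_infinity"
  shows "collinear L x p"
proof -
  obtain l y1 y2 where l: "l \<in> L" "p \<in> l" "y1 \<in> X" "y2 \<in> X" "y1 \<noteq> y2" "y1 \<in> l" "y2 \<in> l"
    using assms(2) by (rule points_at_infinityE)
  have "collinear L x y1" "collinear L x y2"
    using X_collinear[OF \<open>x \<in> X\<close>] l(3,4) unfolding collinear_def by metis+
  moreover have "x \<in> S" using X_subset \<open>x \<in> X\<close> by blast
  ultimately show ?thesis using collinear_line_closed l by blast
qed

lemma collinear_points_at_infinity:
  assumes "p \<in> points_at_infinity" "q \<in> points_at_infinity"
  shows "collinear L p q"
proof -
  obtain l y1 y2 where l: "l \<in> L" "q \<in> l" "y1 \<in> X" "y2 \<in> X" "y1 \<noteq> y2" "y1 \<in> l" "y2 \<in> l"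
    using assms(2) by (rule points_at_infinityE)
  have "collinear L p y1" "collinear L p y2"
    using collinear_X_point_at_infinity assms(1) l(3,4) unfolding collinear_def by blast+
  moreover have "p \<in> S" using assms(1) T_subset unfolding points_at_infinity_def by blast
  ultimately show ?thesis using collinear_line_closed l by blast
qed

lemma line_through_two_X_points_subset:
  assumes "m \<in> L" "x \<in> m" "y \<in> m" "x \<in> X" "y \<in> X" "x \<noteq> y"
  shows "m \<subseteq> X \<union> points_at_infinity"
proof
  fix z assume "z \<in> m"
  show "z \<in> X \<union> points_at_infinity"
  proof (cases "z \<in> T")
    case True
    then show ?thesis using assms \<open>z \<in> m\<close> unfolding points_at_infinity_def by blast
  next
    case False
    then show ?thesis using X_line_closed[OF assms] \<open>z \<in> m\<close> by blast
  qed
qed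

text \<open>Veblen's axiom for the lines \<open>l\<close>, \<open>m\<close> through \<open>p\<close> makes the line joining \<open>z\<close> and \<open>y2\<close> meet
  \<open>n1\<close>; the meeting point is either in \<open>T\<close> or it drags \<open>z\<close> into \<open>X\<close>.\<close>
lemma line_X_infinity_point_cases:
  assumes l: "l \<in> L" "p \<in> l" "y1 \<in> X" "y2 \<in> X" "y1 \<noteq> y2" "y1 \<in> l" "y2 \<in> l" "p \<in> T"
    and m: "m \<in> L" "u \<in> m" "p \<in> m" "u \<in> X" "u \<notin> l"
    and n1: "n1 \<in> L" "u \<in> n1" "y1 \<in> n1"
    and z: "z \<in> m" "z \<noteq> u" "z \<noteq> p"
  shows "z \<in> X \<or> (\<exists>k w. k \<in> L \<and> z \<in> k \<and> y2 \<in> k \<and> w \<in> k \<and> w \<in> n1 \<and> w \<in> T)"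
proof -
  have notT: "u \<notin> T" "y1 \<notin> T" "y2 \<notin> T" using X_disjoint_T m(4) l(3,4) by auto
  have "l \<noteq> m" using m(2,5) by blast
  have "collinear L y2 u" using X_collinear[OF l(4) m(4)] unfolding collinear_def by metis
  moreover have "collinear L y2 p" using l(1,2,7) unfolding collinear_def by blast
  moreover have "u \<noteq> p" using notT l(8) by blast
  ultimately have "collinear L y2 z"
    using collinear_line_closed[of y2 m u p z] X_points[OF l(4)] m z(1) by blast
  then obtain k where k: "k \<in> L" "y2 \<in> k" "z \<in> k" unfolding collinear_def by blast
  have "z \<notin> T" using line_meets_T_once[of m p z u] m l(8) z notT(1) by blast
  have "y2 \<notin> n1"
  proof
    assume "y2 \<in> n1"
    then have "n1 = l" using line_eqI[of n1 l y1 y2] n1 l by blast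
    then show False using n1(2) m(5) by blast
  qed
  have "p \<notin> n1"
  proof
    assume "p \<in> n1"
    then have "n1 = l" using line_eqI[of n1 l y1 p] n1 l notT(2) by blast
    then show False using n1(2) m(5) by blast
  qed
  have "p \<notin> k"
  proof
    assume "p \<in> k"
    then have "k = l" using line_eqI[of k l y2 p] k l notT(3) by blast
    then have "l = m" using line_eqI[of l m z p] l m z k(3) by blast
    then show False using \<open>l \<noteq> m\<close> by blast
  qed
  have "k \<noteq> n1" using k(2) \<open>y2 \<notin> n1\<close> by blast
  obtain w where w: "w \<in> n1" "w \<in> k"
    using veblen_meet[of l m n1 k p y1 u y2 z] l m n1 k \<open>l \<noteq> m\<close> \<open>p \<notin> n1\<close> \<open>p \<notin> k\<close> \<open>k \<noteq> n1\<close> z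
    by blast
  show ?thesis
  proof (cases "w \<in> T")
    case True
    then show ?thesis using k w by blast
  next
    case False
    have "u \<noteq> y1" using m(5) l(6) by blast
    then have "w \<in> X" using X_line_closed[of n1 u y1 w] n1 m(4) l(3) w(1) False by blast
    moreover have "w \<noteq> y2" using w(1) \<open>y2 \<notin> n1\<close> by blast
    ultimately have "z \<in> X" using X_line_closed[of k w y2 z] k w(2) l(4) \<open>z \<notin> T\<close> by blast
    then show ?thesis by blast
  qed
qed

text \<open>Two such meeting points would both be the unique point of \<open>T\<close> on \<open>n1\<close>; the thickness of
  \<open>m\<close> provides the two candidates.\<close>
lemma line_X_infinity_second_X_point:
  assumes "u \<in> X" "p \<in> points_at_infinity" "m \<in> L" "u \<in> m" "p \<in> m"
  obtains z where "z \<in> X" "z \<in> m" "z \<noteq> u"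
proof -
  obtain l y1 y2 where l: "l \<in> L" "p \<in> l" "y1 \<in> X" "y2 \<in> X" "y1 \<noteq> y2" "y1 \<in> l" "y2 \<in> l" "p \<in> T"
    using assms(2) by (rule points_at_infinityE)
  have notT: "u \<notin> T" "y2 \<notin> T" using X_disjoint_T assms(1) l(4) by auto
  show thesis
  proof (cases "u \<in> l")
    case True
    have "u \<noteq> p" using notT l(8) by blast
    then have "l = m" using line_eqI[of l m u p] True l(1,2) assms(3-5) by blast
    then show thesis using that l(3-7) by metis
  next
    case False
    obtain n1 where n1: "n1 \<in> L" "u \<in> n1" "y1 \<in> n1" using X_collinear[OF assms(1) l(3)] .
    obtain z1 where z1: "z1 \<in> m" "z1 \<noteq> u" "z1 \<noteq> p"
      using exists_point_avoiding_three[OF thick[OF assms(3)], of u p p] by blast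
    obtain z2 where z2: "z2 \<in> m" "z2 \<noteq> u" "z2 \<noteq> p" "z2 \<noteq> z1"
      using exists_point_avoiding_three[OF thick[OF assms(3)], of u p z1] by blast
    note cases = line_X_infinity_point_cases[OF l assms(3,4,5,1) False n1]
    show thesis
    proof (cases "z1 \<in> X \<or> z2 \<in> X")
      case True
      then show thesis using that z1 z2 by blast
    next
      case False
      then obtain k1 w1 k2 w2 where
        k1: "k1 \<in> L" "z1 \<in> k1" "y2 \<in> k1" "w1 \<in> k1" "w1 \<in> n1" "w1 \<in> T" and
        k2: "k2 \<in> L" "z2 \<in> k2" "y2 \<in> k2" "w2 \<in> k2" "w2 \<in> n1" "w2 \<in> T"
        using cases[OF z1] cases[OF z2(1-3)] by blast
      have "w1 = w2" using line_meets_T_once[of n1 w1 w2 u] n1 k1 k2 notT(1) by blast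
      then have "k1 = k2" using line_eqI[of k1 k2 y2 w1] k1 k2 notT(2) by blast
      then have "k1 = m" using line_eqI[of k1 m z1 z2] k1 k2 z1 z2 assms(3) by blast
      then have "y2 \<in> m" using k1(3) by blast
      moreover have "y2 \<noteq> p" using notT(2) l(8) by blast
      ultimately have "l = m" using line_eqI[of l m y2 p] l(1,2,7) assms(3,5) by blast
      then show thesis using False \<open>u \<notin> l\<close> assms(4) by blast
    qed
  qed
qed

text \<open>Veblen's axiom for the lines \<open>m\<close>, \<open>nu\<close> through \<open>u\<close> makes \<open>k\<close> meet \<open>nv\<close>; the meeting point
  cannot be \<open>v\<close>, the only point of \<open>T\<close> on \<open>nv\<close>, so it lies in \<open>X\<close>.\<close>
lemma line_to_T_line_second_X_point:
  assumes m: "m \<in> L" "m \<subseteq> T" "u \<in> m" "v \<in> m" "u \<noteq> v" "q \<in> m" "q \<noteq> u" "q \<noteq> v"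
    and nu: "nu \<in> L" "x \<in> nu" "a \<in> nu" "u \<in> nu"
    and nv: "nv \<in> L" "x \<in> nv" "b \<in> nv" "v \<in> nv"
    and X: "x \<in> X" "a \<in> X" "b \<in> X" "a \<noteq> x" "b \<noteq> x"
    and k: "k \<in> L" "a \<in> k" "q \<in> k"
  obtains w where "w \<in> X" "w \<in> k" "w \<noteq> a"
proof -
  have notT: "x \<notin> T" "a \<notin> T" using X_disjoint_T X(1,2) by blast+
  have "m \<noteq> nu" using nu(2) m(2) notT(1) by blast
  have "u \<notin> k"
  proof
    assume "u \<in> k"
    then have "k = nu" using line_eqI[of k nu u a] k nu notT(2) m(2,3) by blast
    then have "m = nu" using line_eqI[of m nu q u] k(3) m(1,3,6,7) nu(1,4) by blast
    then show False using \<open>m \<noteq> nu\<close> by blast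
  qed
  have "u \<notin> nv"
  proof
    assume "u \<in> nv"
    then have "nv = m" using line_eqI[of nv m u v] nv(1,4) m(1,3,4,5) by blast
    then show False using nv(2) m(2) notT(1) by blast
  qed
  have "a \<notin> nv"
  proof
    assume "a \<in> nv"
    then have "nv = nu" using line_eqI[of nv nu a x] nv(1,2) nu(1-3) X(4) by blast
    then show False using \<open>u \<notin> nv\<close> nu(4) by blast
  qed
  then have "k \<noteq> nv" using k(2) by blast
  obtain w where w: "w \<in> k" "w \<in> nv"
    using veblen_meet[of m nu k nv u q a v x] m nu k nv \<open>m \<noteq> nu\<close> \<open>u \<notin> k\<close> \<open>u \<notin> nv\<close>
      \<open>k \<noteq> nv\<close> by blast
  have "w \<notin> T"
  proof
    assume "w \<in> T"
    then have "w = v" using line_meets_T_once[of nv w v x] nv w(2) m(2,4) notT(1) by blast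
    then have "k = m" using line_eqI[of k m v q] k w(1) m(1,4,6,8) by blast
    then show False using k(2) m(2) notT(2) by blast
  qed
  then have "w \<in> X" using X_line_closed[of nv x b w] nv X(1,3,5) w(2) by blast
  moreover have "w \<noteq> a" using w(2) \<open>a \<notin> nv\<close> by blast
  ultimately show thesis using that w(1) by blast
qed

lemma line_through_two_points_at_infinity_subset:
  assumes uv: "u \<in> points_at_infinity" "v \<in> points_at_infinity" "u \<noteq> v"
    and m: "m \<in> L" "u \<in> m" "v \<in> m"
  shows "m \<subseteq> X \<union> points_at_infinity"
proof
  fix q assume "q \<in> m"
  show "q \<in> X \<union> points_at_infinity"
  proof (cases "q = u \<or> q = v")
    case True
    then show ?thesis using uv by blast
  next
    case False
    have "u \<in> T" "v \<in> T" using uv(1,2) unfolding points_at_infinity_def by blast+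
    then have "m \<subseteq> T" using T_line_subset[of m u v] m uv(3) by blast
    obtain x where x: "x \<in> X" using uv(1) unfolding points_at_infinity_def by blast
    obtain nu where nu: "nu \<in> L" "x \<in> nu" "u \<in> nu"
      using collinear_X_point_at_infinity[OF x uv(1)] unfolding collinear_def by blast
    obtain nv where nv: "nv \<in> L" "x \<in> nv" "v \<in> nv"
      using collinear_X_point_at_infinity[OF x uv(2)] unfolding collinear_def by blast
    obtain a where a: "a \<in> X" "a \<in> nu" "a \<noteq> x"
      using line_X_infinity_second_X_point[OF x uv(1) nu] by blast
    obtain b where b: "b \<in> X" "b \<in> nv" "b \<noteq> x"
      using line_X_infinity_second_X_point[OF x uv(2) nv] by blast
    have "collinear L a q"
      using collinear_line_closed[of a m u v q] X_points[OF a(1)] m uv \<open>q \<in> m\<close>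
        collinear_X_point_at_infinity[OF a(1)] by blast
    then obtain k where k: "k \<in> L" "a \<in> k" "q \<in> k" unfolding collinear_def by blast
    obtain w where "w \<in> X" "w \<in> k" "w \<noteq> a"
      using line_to_T_line_second_X_point[OF m(1) \<open>m \<subseteq> T\<close> m(2,3) uv(3) \<open>q \<in> m\<close> _ _
          nu(1,2) a(2) nu(3) nv(1,2) b(2) nv(3) x a(1) b(1) a(3) b(3) k] False
      by blast
    then have "q \<in> points_at_infinity"
      unfolding points_at_infinity_def using k a(1) \<open>q \<in> m\<close> \<open>m \<subseteq> T\<close> by blast
    then show ?thesis by blast
  qed
qed

lemma union_points_at_infinity_diff_T: "(X \<union> points_at_infinity) - T = X"
  using X_subset unfolding points_at_infinity_def by blast

lemma strong_subspace_union_points_at_infinity: "strong_subspace S L (X \<union> points_at_infinity)"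
proof (rule strong_subspaceI)
  show "X \<union> points_at_infinity \<subseteq> S"
    using X_subset T_subset unfolding points_at_infinity_def by blast
next
  fix m u v
  assume m: "m \<in> L" "u \<in> m" "v \<in> m" and uv: "u \<in> X \<union> points_at_infinity"
    "v \<in> X \<union> points_at_infinity" "u \<noteq> v"
  consider "u \<in> X" "v \<in> X" | "u \<in> X" "v \<in> points_at_infinity" | "u \<in> points_at_infinity" "v \<in> X"
    | "u \<in> points_at_infinity" "v \<in> points_at_infinity"
    using uv by blast
  then show "m \<subseteq> X \<union> points_at_infinity"
  proof cases
    case 1
    then show ?thesis using line_through_two_X_points_subset m uv(3) by blast
  next
    case 2
    then obtain z where "z \<in> X" "z \<in> m" "z \<noteq> u"
      using line_X_infinity_second_X_point m by blast
    then show ?thesis using line_through_two_X_points_subset[of m u z] m(1,2) \<open>u \<in> X\<close> by blast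
  next
    case 3
    then obtain z where "z \<in> X" "z \<in> m" "z \<noteq> v"
      using line_X_infinity_second_X_point m by blast
    then show ?thesis using line_through_two_X_points_subset[of m v z] m(1,3) \<open>v \<in> X\<close> by blast
  next
    case 4
    then show ?thesis using line_through_two_points_at_infinity_subset m uv(3) by blast
  qed
next
  fix x y assume xy: "x \<in> X \<union> points_at_infinity" "y \<in> X \<union> points_at_infinity"
  have X_col: "collinear L x y" if "x \<in> X" "y \<in> X" for x y
    using X_collinear[OF that] unfolding collinear_def by metis
  have sym: "collinear L x y" if "collinear L y x" for x y
    using that unfolding collinear_def by blast
  have "collinear L x y"
    using xy X_col collinear_X_point_at_infinity collinear_points_at_infinity
      sym[OF collinear_X_point_at_infinity] by blast
  then show "\<exists>l\<in>L. x \<in> l \<and> y \<in> l" unfolding collinear_def .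
qed

end

lemma (in thick_veblenian_gamma_space) strong_subspace_compl_iff:
  assumes "subspace S L T"
  shows "strong_subspace (S - T) (compl_lines L T) X \<longleftrightarrow> (\<exists>Y. strong_subspace S L Y \<and> X = Y - T)"
proof
  assume "strong_subspace (S - T) (compl_lines L T) X"
  then interpret strong_subspace_of_complement S L T X
    using assms by unfold_locales
  show "\<exists>Y. strong_subspace S L Y \<and> X = Y - T"
    using strong_subspace_union_points_at_infinity union_points_at_infinity_diff_T by metis
next
  assume "\<exists>Y. strong_subspace S L Y \<and> X = Y - T"
  then show "strong_subspace (S - T) (compl_lines L T) X" using strong_subspace_compl by blast
qed

section \<open>Segre products\<close>

lemma inj_subst_pt: "inj (subst_pt a i)"
  unfolding subst_pt_def by (rule injI) (metis fun_upd_same)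

lemma subst_pt_apply: "subst_pt a i x j = (if j = i then x else a j)"
  unfolding subst_pt_def by simp

lemma subst_pt_in_segre_points:
  assumes "a \<in> segre_points I S" "i \<in> I"
  shows "subst_pt a i x \<in> segre_points I S \<longleftrightarrow> x \<in> S i"
  using assms unfolding segre_points_def subst_pt_def
  by (auto simp: PiE_iff extensional_def)

lemma subst_pt_in_segre_points_diff:
  assumes "a \<in> segre_points I S" "i \<in> I"
  shows "subst_pt a i x \<in> segre_points I S - H \<longleftrightarrow> x \<in> S i - trace S H a i"
  using subst_pt_in_segre_points[OF assms] unfolding trace_def by blast

lemma subst_set_diff_trace:
  "Y \<subseteq> S i \<Longrightarrow> subst_set a i Y - H = subst_set a i (Y - trace S H a i)"
  unfolding subst_set_def trace_def by auto

lemma subst_set_in_segre_lines: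
  "a \<in> segre_points I S \<Longrightarrow> i \<in> I \<Longrightarrow> m \<in> L i \<Longrightarrow> subst_set a i m \<in> segre_lines I S L"
  unfolding segre_lines_def by blast

lemma segre_line_through_subst_pts:
  assumes "l \<in> segre_lines I S L" "subst_pt a i z1 \<in> l" "subst_pt a i z2 \<in> l" "z1 \<noteq> z2"
  obtains m where "m \<in> L i" "l = subst_set a i m"
proof -
  obtain b j m where "j \<in> I" "m \<in> L j" and l: "l = subst_set b j m"
    using assms(1) unfolding segre_lines_def by blast
  then obtain x1 x2 where x: "subst_pt a i z1 = subst_pt b j x1" "subst_pt a i z2 = subst_pt b j x2"
    using assms(2,3) unfolding subst_set_def by blast
  have "j = i"
  proof (rule ccontr)
    assume "j \<noteq> i"
    then have "z1 = b i" "z2 = b i"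
      using fun_cong[OF x(1), of i] fun_cong[OF x(2), of i] by (simp_all add: subst_pt_apply)
    then show False using \<open>z1 \<noteq> z2\<close> by simp
  qed
  have "b k = a k" if "k \<noteq> i" for k
    using fun_cong[OF x(1), of k] that \<open>j = i\<close> by (simp add: subst_pt_apply)
  then have "subst_pt b j = subst_pt a i"
    using \<open>j = i\<close> by (auto simp: fun_eq_iff subst_pt_apply)
  then show thesis using that \<open>m \<in> L j\<close> \<open>j = i\<close> l unfolding subst_set_def by simp
qed

lemma trace_subspace:
  assumes H: "subspace (segre_points I S) (segre_lines I S L) H"
    and a: "a \<in> segre_points I S" and i: "i \<in> I" and lines: "\<And>m. m \<in> L i \<Longrightarrow> m \<subseteq> S i"
  shows "subspace (S i) (L i) (trace S H a i)"
  unfolding subspace_def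
proof (intro conjI ballI impI)
  show "trace S H a i \<subseteq> S i" unfolding trace_def by blast
next
  fix m assume "m \<in> L i" and "\<exists>x y. x \<in> m \<inter> trace S H a i \<and> y \<in> m \<inter> trace S H a i \<and> x \<noteq> y"
  then obtain x y where xy: "x \<in> m" "y \<in> m" "x \<noteq> y" "subst_pt a i x \<in> H" "subst_pt a i y \<in> H"
    unfolding trace_def by blast
  have "subst_pt a i x \<noteq> subst_pt a i y" using inj_subst_pt xy(3) by (metis injD)
  moreover have "subst_pt a i x \<in> subst_set a i m" "subst_pt a i y \<in> subst_set a i m"
    using xy(1,2) unfolding subst_set_def by blast+
  ultimately have "subst_set a i m \<subseteq> H"
    using H subst_set_in_segre_lines[where L = L, OF a i \<open>m \<in> L i\<close>] xy(4,5)
    unfolding subspace_def by blast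
  then show "m \<subseteq> trace S H a i"
    using lines[OF \<open>m \<in> L i\<close>] unfolding trace_def subst_set_def by blast
qed

lemma strong_subspace_subst_set_iff:
  assumes pls: "partial_linear_space (S i) (L i)"
    and a: "a \<in> segre_points I S" and i: "i \<in> I"
  shows "strong_subspace (segre_points I S - H) (compl_lines (segre_lines I S L) H) (subst_set a i Z)
     \<longleftrightarrow> strong_subspace (S i - trace S H a i) (compl_lines (L i) (trace S H a i)) Z"
  unfolding subst_set_def
proof (rule strong_subspace_image_iff[OF inj_subst_pt])
  let ?T = "trace S H a i"
  have lines: "m \<subseteq> S i" if "m \<in> L i" for m
    using pls that unfolding partial_linear_space_def by blast
  show "subst_pt a i z \<in> segre_points I S - H \<longleftrightarrow> z \<in> S i - ?T" for z
    by (rule subst_pt_in_segre_points_diff[OF a i])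
  show "subst_pt a i ` m' \<in> compl_lines (segre_lines I S L) H"
    if m': "m' \<in> compl_lines (L i) ?T" for m'
  proof -
    obtain m where m: "m \<in> L i" "\<not> m \<subseteq> ?T" "m' = m - ?T"
      using m' by (rule compl_linesE)
    then obtain x where "x \<in> m" "subst_pt a i x \<notin> H"
      using lines[OF m(1)] unfolding trace_def by blast
    then have "subst_set a i m - H \<in> compl_lines (segre_lines I S L) H"
      using compl_linesI[OF subst_set_in_segre_lines[where L = L, OF a i m(1)]]
      unfolding subst_set_def by blast
    moreover have "subst_pt a i ` m' = subst_set a i m - H"
      using subst_set_diff_trace[where S = S and i = i, OF lines[OF m(1)]] m(3)
      unfolding subst_set_def by simp
    ultimately show ?thesis by simp
  qed
  show "\<exists>m'\<in>compl_lines (L i) ?T. l' = subst_pt a i ` m'"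
    if l': "l' \<in> compl_lines (segre_lines I S L) H" "subst_pt a i z1 \<in> l'" "subst_pt a i z2 \<in> l'"
      and "z1 \<noteq> z2" for l' z1 z2
  proof -
    obtain l where l: "l \<in> segre_lines I S L" "l' = l - H"
      using l'(1) by (rule compl_linesE)
    obtain m where m: "m \<in> L i" "l = subst_set a i m"
      using segre_line_through_subst_pts[OF l(1) _ _ \<open>z1 \<noteq> z2\<close>] l'(2,3) l(2) by blast
    have "subst_pt a i z1 \<in> subst_pt a i ` m" using l'(2) l(2) m(2) unfolding subst_set_def by blast
    then have "z1 \<in> m" by (simp add: inj_image_mem_iff[OF inj_subst_pt])
    moreover have "z1 \<notin> ?T" using l'(2) l(2) unfolding trace_def by blast
    ultimately have "m - ?T \<in> compl_lines (L i) ?T" using m(1) by (intro compl_linesI)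
    moreover have "l' = subst_pt a i ` (m - ?T)"
      using subst_set_diff_trace[where S = S and i = i, OF lines[OF m(1)]] l(2) m(2)
      unfolding subst_set_def by simp
    ultimately show ?thesis by (intro bexI[of _ "m - ?T"])
  qed
  show "\<exists>m'\<in>compl_lines (L i) ?T. z \<in> m'" if z: "z \<in> S i - ?T" for z
  proof -
    obtain m where "m \<in> L i" "z \<in> m" using pls z unfolding partial_linear_space_def by blast
    then have "m - ?T \<in> compl_lines (L i) ?T" "z \<in> m - ?T"
      using z by (auto intro: compl_linesI)
    then show ?thesis by (intro bexI[of _ "m - ?T"])
  qed
qed

lemma one_coordinate_star:
  assumes one: "\<And>x y. x \<in> X \<Longrightarrow> y \<in> X \<Longrightarrow> \<exists>j\<in>J. y = x(j := y j)"
    and "a \<in> X" "J \<noteq> {}"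
  obtains i where "i \<in> J" "\<And>c. c \<in> X \<Longrightarrow> c = a(i := c i)"
proof (cases "X = {a}")
  case True
  then show thesis using that \<open>J \<noteq> {}\<close> by fastforce
next
  case False
  then obtain b where "b \<in> X" "b \<noteq> a" using \<open>a \<in> X\<close> by blast
  then obtain i where "i \<in> J" and b: "b = a(i := b i)" using one \<open>a \<in> X\<close> by blast
  then have "b i \<noteq> a i" using \<open>b \<noteq> a\<close> by (metis fun_upd_triv)
  have "c = a(i := c i)" if "c \<in> X" for c
  proof (rule ccontr)
    assume c: "c \<noteq> a(i := c i)"
    obtain j where cj: "c = a(j := c j)" using one \<open>a \<in> X\<close> \<open>c \<in> X\<close> by blast
    with c have "j \<noteq> i" by blast
    then have "c i = a i" using cj by (metis fun_upd_other)
    have "c j \<noteq> a j" using c cj \<open>c i = a i\<close> by (metis fun_upd_triv)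
    obtain k where "c = b(k := c k)" using one \<open>b \<in> X\<close> \<open>c \<in> X\<close> by blast
    then have "k = i"
      using \<open>c i = a i\<close> \<open>b i \<noteq> a i\<close> by (metis fun_upd_other)
    then have "c j = b j" using \<open>c = b(k := c k)\<close> \<open>j \<noteq> i\<close> by (metis fun_upd_other)
    also have "b j = a j" using b \<open>j \<noteq> i\<close> by (metis fun_upd_other)
    finally show False using \<open>c j \<noteq> a j\<close> by blast
  qed
  then show thesis using that \<open>i \<in> J\<close> by blast
qed

lemma compl_segre_line_one_coordinate:
  assumes "l' \<in> compl_lines (segre_lines I S L) H" "x \<in> l'" "y \<in> l'"
  shows "\<exists>j\<in>I. y = x(j := y j)"
proof -
  obtain l where "l \<in> segre_lines I S L" "l' = l - H" using assms(1) by (rule compl_linesE)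
  then obtain b j m where "j \<in> I" "l = subst_set b j m" unfolding segre_lines_def by blast
  then obtain x1 x2 where "x = b(j := x1)" "y = b(j := x2)"
    using assms(2,3) \<open>l' = l - H\<close> unfolding subst_set_def subst_pt_def by blast
  then show ?thesis using \<open>j \<in> I\<close> by auto
qed

lemma strong_subspace_compl_segre_star:
  assumes X: "strong_subspace (segre_points I S - H) (compl_lines (segre_lines I S L) H) X"
    and "segre_points I S \<noteq> {}" "I \<noteq> {}"
  obtains a i where "a \<in> segre_points I S" "i \<in> I" "X = subst_set a i ((\<lambda>x. x i) ` X)"
proof (cases "X = {}")
  case True
  then show thesis using that assms(2,3) unfolding subst_set_def by blast
next
  case False
  then obtain a where "a \<in> X" by blast
  moreover have "\<exists>j\<in>I. y = x(j := y j)" if "x \<in> X" "y \<in> X" for x y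
    using strong_subspace_collinear[OF X that] compl_segre_line_one_coordinate by metis
  ultimately obtain i where "i \<in> I" and star: "\<And>c. c \<in> X \<Longrightarrow> c = a(i := c i)"
    using one_coordinate_star \<open>I \<noteq> {}\<close> by metis
  have "X = subst_set a i ((\<lambda>x. x i) ` X)"
    unfolding subst_set_def subst_pt_def image_image using star by force
  moreover have "a \<in> segre_points I S" using strong_subspace_subset[OF X] \<open>a \<in> X\<close> by blast
  ultimately show thesis using that \<open>i \<in> I\<close> by blast
qed

lemma strong_subspace_compl_segre_iff:
  assumes pls: "\<And>i. i \<in> I \<Longrightarrow> partial_linear_space (S i) (L i)"
    and "segre_points I S \<noteq> {}" "I \<noteq> {}"
  shows "strong_subspace (segre_points I S - H) (compl_lines (segre_lines I S L) H) X \<longleftrightarrow>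
    (\<exists>a\<in>segre_points I S. \<exists>i\<in>I. \<exists>Xi.
      strong_subspace (S i - trace S H a i) (compl_lines (L i) (trace S H a i)) Xi \<and> X = subst_set a i Xi)"
    (is "?P \<longleftrightarrow> _")
proof
  assume ?P
  then obtain a i where a: "a \<in> segre_points I S" "i \<in> I" "X = subst_set a i ((\<lambda>x. x i) ` X)"
    using strong_subspace_compl_segre_star assms(2,3) by metis
  then show "\<exists>a\<in>segre_points I S. \<exists>i\<in>I. \<exists>Xi. strong_subspace (S i - trace S H a i)
      (compl_lines (L i) (trace S H a i)) Xi \<and> X = subst_set a i Xi"
    using \<open>?P\<close> strong_subspace_subst_set_iff[where S = S and L = L, OF pls[OF a(2)] a(1,2)] by metis
next
  assume "\<exists>a\<in>segre_points I S. \<exists>i\<in>I. \<exists>Xi. strong_subspace (S i - trace S H a i)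
      (compl_lines (L i) (trace S H a i)) Xi \<and> X = subst_set a i Xi"
  then obtain a i Xi where a: "a \<in> segre_points I S" "i \<in> I" "X = subst_set a i Xi"
    and "strong_subspace (S i - trace S H a i) (compl_lines (L i) (trace S H a i)) Xi"
    by blast
  then show ?P using strong_subspace_subst_set_iff[where S = S and L = L, OF pls[OF a(2)] a(1,2)]
    by simp
qed

lemma strong_subspace_factor_compl_iff:
  assumes "thick_veblenian_gamma_space (S i) (L i)"
    and H: "subspace (segre_points I S) (segre_lines I S L) H"
    and a: "a \<in> segre_points I S" and i: "i \<in> I"
  shows "(\<exists>Y. strong_subspace (S i) (L i) Y \<and> X = subst_set a i Y - H) \<longleftrightarrow>
    (\<exists>Xi. strong_subspace (S i - trace S H a i) (compl_lines (L i) (trace S H a i)) Xi \<and>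
      X = subst_set a i Xi)"
proof -
  interpret thick_veblenian_gamma_space "S i" "L i" by fact
  have "subspace (S i) (L i) (trace S H a i)"
    using trace_subspace[OF H a i] gamma unfolding gamma_space_def partial_linear_space_def by blast
  then show ?thesis
    using strong_subspace_compl_iff subst_set_diff_trace[where S = S and i = i] strong_subspace_subset
    by metis
qed

theorem proposition3p11:
  fixes I :: "'i set" and S :: "'i \<Rightarrow> 'p set" and L :: "'i \<Rightarrow> 'p set set"
    and H :: "('i \<Rightarrow> 'p) set" and X :: "('i \<Rightarrow> 'p) set"
  assumes "countable I"
    and "\<exists>i\<in>I. \<exists>j\<in>I. i \<noteq> j"
    and "\<forall>i\<in>I. gamma_space (S i) (L i) \<and> veblenian (S i) (L i)"
    and "\<forall>i\<in>I. \<forall>l\<in>L i. infinite l \<or> 4 \<le> card l"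
    and "hyperplane (segre_points I S) (segre_lines I S L) H"
  shows "(strong_subspace (compl_points (segre_points I S) H)
             (compl_lines (segre_lines I S L) H) X
          \<longleftrightarrow> (\<exists>a\<in>segre_points I S. \<exists>i\<in>I. \<exists>Y. strong_subspace (S i) (L i) Y \<and>
                 X = subst_set a i Y - H))
       \<and> (strong_subspace (compl_points (segre_points I S) H)
             (compl_lines (segre_lines I S L) H) X
          \<longleftrightarrow> (\<exists>a\<in>segre_points I S. \<exists>i\<in>I. \<exists>Xi.
                 strong_subspace (compl_points (S i) (trace S H a i))
                   (compl_lines (L i) (trace S H a i)) Xi \<and>
                 X = subst_set a i Xi))"
proof -
  have "I \<noteq> {}" using assms(2) by blast
  have factor: "thick_veblenian_gamma_space (S i) (L i)" if "i \<in> I" for i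
    using assms(3,4) that by unfold_locales blast+
  then have pls: "partial_linear_space (S i) (L i)" if "i \<in> I" for i
    using that unfolding thick_veblenian_gamma_space_def gamma_space_def by blast
  have H: "subspace (segre_points I S) (segre_lines I S L) H" "segre_points I S \<noteq> {}"
    using assms(5) unfolding hyperplane_def subspace_def by blast+
  have "strong_subspace (segre_points I S - H) (compl_lines (segre_lines I S L) H) X \<longleftrightarrow>
    (\<exists>a\<in>segre_points I S. \<exists>i\<in>I. \<exists>Xi.
      strong_subspace (S i - trace S H a i) (compl_lines (L i) (trace S H a i)) Xi \<and> X = subst_set a i Xi)"
    by (rule strong_subspace_compl_segre_iff[OF pls H(2) \<open>I \<noteq> {}\<close>])
  moreover have "(\<exists>a\<in>segre_points I S. \<exists>i\<in>I. \<exists>Y. strong_subspace (S i) (L i) Y \<and> X = subst_set a i Y - H)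
    \<longleftrightarrow> (\<exists>a\<in>segre_points I S. \<exists>i\<in>I. \<exists>Xi.
      strong_subspace (S i - trace S H a i) (compl_lines (L i) (trace S H a i)) Xi \<and> X = subst_set a i Xi)"
    by (intro bex_cong refl strong_subspace_factor_compl_iff[OF factor H(1)])
  ultimately show ?thesis unfolding compl_points_def by simp
qed

end
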